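(* Let $n\ge 1$, let $(x_1,y_1),\dots,(x_n,y_n)\in\mathbb{R}^p\times\mathbb{R}$ and $x_{n+1}\in\mathbb{R}^p$. For every $z\in\mathbb{R}$ let $\mu_z:\mathbb{R}^p\to\mathbb{R}$ be a prediction function, and let $S:\mathbb{R}\times\mathbb{R}\to\mathbb{R}$ be a score function. Define $E_i(z)=S(y_i,\mu_z(x_i))$ for $i\in\{1,\dots,n\}$, $E_{n+1}(z)=S(z,\mu_z(x_{n+1}))$, and $$\pi(z)=1-\frac{1}{n+1}\sum_{i=1}^{n+1}\mathbb{1}_{E_i(z)\le E_{n+1}(z)}.$$ Assume the family $(\mu_z)_{z\in\mathbb{R}}$ is stable: there are constants $\tau_1,\dots,\tau_{n+1}\ge 0$ such that for every $i\in\{1,\dots,n+1\}$ and all $z,z_0,q\in\mathbb{R}$, $$|S(q,\mu_z(x_i))-S(q,\mu_{z_0}(x_i))|\le\tau_i.$$ For $z,\hat z\in\mathbb{R}$ define, for $i\in\{1,\dots,n\}$, $L_i(z,\hat z)=E_i(\hat z)-\tau_i$ and $U_i(z,\hat z)=E_i(\hat z)+\tau_i$, and $L_{n+1}(z,\hat z)=S(z,\mu_{\hat z}(x_{n+1}))-\tau_{n+1}$, $U_{n+1}(z,\hat z)=S(z,\mu_{\hat z}(x_{n+1}))+\tau_{n+1}$. Let $$\pi_{\rm lo}(z,\hat z)=1-\frac{1}{n+1}\sum_{i=1}^{n+1}\mathbb{1}_{L_i(z,\hat z)\le U_{n+1}(z,\hat z)},\qquad \pi_{\rm up}(z,\hat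 z)=1-\frac{1}{n+1}\sum_{i=1}^{n+1}\mathbb{1}_{U_i(z,\hat z)\le L_{n+1}(z,\hat z)}.$$ Then for all $z,\hat z\in\mathbb{R}$, $\pi_{\rm lo}(z,\hat z)\le\pi(z)\le\pi_{\rm up}(z,\hat z)$.
   Context: $\mathbb{1}_A$ denotes the indicator of the event/condition $A$. In the paper, $\mu_z$ is the model fitted on the augmented data $\{(x_1,y_1),\dots,(x_n,y_n),(x_{n+1},z)\}$, and $\pi(z)$ equals $1-\mathrm{Rank}(E_{n+1}(z))/(n+1)$, where $\mathrm{Rank}(u_j)=\sum_i \mathbb{1}_{u_i\le u_j}$ over the set $\{E_1(z),\dots,E_{n+1}(z)\}$. *)

theory Defs
  imports "HOL-Analysis.Analysis"
begin

definition conf_E :: "nat \<Rightarrow> (nat \<Rightarrow> real ^ 'p) \<Rightarrow> (nat \<Rightarrow> real) \<Rightarrow>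
    (real \<Rightarrow> real ^ 'p \<Rightarrow> real) \<Rightarrow> (real \<Rightarrow> real \<Rightarrow> real) \<Rightarrow> real \<Rightarrow> nat \<Rightarrow> real" where
  "conf_E n x y mu S z i = (if i = n + 1 then S z (mu z (x (n + 1))) else S (y i) (mu z (x i)))"

definition conf_pi :: "nat \<Rightarrow> (nat \<Rightarrow> real ^ 'p) \<Rightarrow> (nat \<Rightarrow> real) \<Rightarrow>
    (real \<Rightarrow> real ^ 'p \<Rightarrow> real) \<Rightarrow> (real \<Rightarrow> real \<Rightarrow> real) \<Rightarrow> real \<Rightarrow> real" where
  "conf_pi n x y mu S z = 1 - (1 / real (n + 1)) *
     (\<Sum>i = 1..n + 1. if conf_E n x y mu S z i \<le> conf_E n x y mu S z (n + 1) then 1 else 0)"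

definition conf_L :: "nat \<Rightarrow> (nat \<Rightarrow> real ^ 'p) \<Rightarrow> (nat \<Rightarrow> real) \<Rightarrow>
    (real \<Rightarrow> real ^ 'p \<Rightarrow> real) \<Rightarrow> (real \<Rightarrow> real \<Rightarrow> real) \<Rightarrow> (nat \<Rightarrow> real) \<Rightarrow>
    real \<Rightarrow> real \<Rightarrow> nat \<Rightarrow> real" where
  "conf_L n x y mu S tau z zh i = (if i = n + 1 then S z (mu zh (x (n + 1))) - tau (n + 1)
     else conf_E n x y mu S zh i - tau i)"

definition conf_U :: "nat \<Rightarrow> (nat \<Rightarrow> real ^ 'p) \<Rightarrow> (nat \<Rightarrow> real) \<Rightarrow>
    (real \<Rightarrow> real ^ 'p \<Rightarrow> real) \<Rightarrow> (real \<Rightarrow> real \<Rightarrow> real) \<Rightarrow> (nat \<Rightarrow> real) \<Rightarrow>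
    real \<Rightarrow> real \<Rightarrow> nat \<Rightarrow> real" where
  "conf_U n x y mu S tau z zh i = (if i = n + 1 then S z (mu zh (x (n + 1))) + tau (n + 1)
     else conf_E n x y mu S zh i + tau i)"

definition conf_pi_lo :: "nat \<Rightarrow> (nat \<Rightarrow> real ^ 'p) \<Rightarrow> (nat \<Rightarrow> real) \<Rightarrow>
    (real \<Rightarrow> real ^ 'p \<Rightarrow> real) \<Rightarrow> (real \<Rightarrow> real \<Rightarrow> real) \<Rightarrow> (nat \<Rightarrow> real) \<Rightarrow>
    real \<Rightarrow> real \<Rightarrow> real" where
  "conf_pi_lo n x y mu S tau z zh = 1 - (1 / real (n + 1)) *
     (\<Sum>i = 1..n + 1. if conf_L n x y mu S tau z zh i \<le> conf_U n x y mu S tau z zh (n + 1) then 1 else 0)"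

definition conf_pi_up :: "nat \<Rightarrow> (nat \<Rightarrow> real ^ 'p) \<Rightarrow> (nat \<Rightarrow> real) \<Rightarrow>
    (real \<Rightarrow> real ^ 'p \<Rightarrow> real) \<Rightarrow> (real \<Rightarrow> real \<Rightarrow> real) \<Rightarrow> (nat \<Rightarrow> real) \<Rightarrow>
    real \<Rightarrow> real \<Rightarrow> real" where
  "conf_pi_up n x y mu S tau z zh = 1 - (1 / real (n + 1)) *
     (\<Sum>i = 1..n + 1. if conf_U n x y mu S tau z zh i \<le> conf_L n x y mu S tau z zh (n + 1) then 1 else 0)"

end

theory Submission
  imports Defs
begin

text \<open>Stability puts every score E i(z) into the interval [L i, U i] computed at an arbitrary
  reference point zh. Widening each comparison E i \<le> E (n+1) to L i \<le> U (n+1) can only add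
  indices to the rank count, and narrowing it to U i \<le> L (n+1) can only remove some; the
  p-value is antitone in the rank count.\<close>

lemma count_le_count_if_imp:
  assumes "\<And>i. i \<in> A \<Longrightarrow> P i \<Longrightarrow> Q i"
  shows "(\<Sum>i\<in>A. if P i then 1 else 0) \<le> (\<Sum>i\<in>A. if Q i then 1 else (0::real))"
  using assms by (intro sum_mono) auto

lemma rank_count_bounds:
  fixes e l u :: "'a \<Rightarrow> 'b::preorder"
  assumes enclosed: "\<And>i. i \<in> A \<Longrightarrow> l i \<le> e i \<and> e i \<le> u i" and "j \<in> A"
  shows "(\<Sum>i\<in>A. if u i \<le> l j then 1 else 0) \<le> (\<Sum>i\<in>A. if e i \<le> e j then 1 else (0::real))"
    and "(\<Sum>i\<in>A. if e i \<le> e j then 1 else 0) \<le> (\<Sum>i\<in>A. if l i \<le> u j then 1 else (0::real))"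
  using enclosed[OF \<open>j \<in> A\<close>]
  by (auto intro!: count_le_count_if_imp dest!: enclosed intro: order_trans)

lemma conf_E_enclosed:
  assumes stable: "\<And>i a b q. i \<in> {1..n + 1} \<Longrightarrow> \<bar>S q (mu a (x i)) - S q (mu b (x i))\<bar> \<le> tau i"
    and "i \<in> {1..n + 1}"
  shows "conf_L n x y mu S tau z zh i \<le> conf_E n x y mu S z i
      \<and> conf_E n x y mu S z i \<le> conf_U n x y mu S tau z zh i"
proof (cases "i = n + 1")
  case True
  then show ?thesis
    using stable[OF \<open>i \<in> _\<close>, where a = z and b = zh and q = z]
    by (simp add: conf_E_def conf_L_def conf_U_def abs_le_iff)
next
  case False
  then show ?thesis
    using stable[OF \<open>i \<in> _\<close>, where a = z and b = zh and q = "y i"]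
    by (simp add: conf_E_def conf_L_def conf_U_def abs_le_iff)
qed

lemma one_minus_scaled_antimono:
  fixes a b :: real
  assumes "a \<le> b" and "0 \<le> c"
  shows "1 - c * b \<le> 1 - c * a"
  using mult_left_mono[OF assms] by simp

theorem proposition3p2:
  fixes n :: nat and x :: "nat \<Rightarrow> real ^ 'p" and y :: "nat \<Rightarrow> real"
    and mu :: "real \<Rightarrow> real ^ 'p \<Rightarrow> real" and S :: "real \<Rightarrow> real \<Rightarrow> real"
    and tau :: "nat \<Rightarrow> real" and z zh :: real
  assumes "n \<ge> 1"
    and "\<And>i. i \<in> {1..n + 1} \<Longrightarrow> tau i \<ge> 0"
    and "\<And>i z z0 q. i \<in> {1..n + 1} \<Longrightarrow> \<bar>S q (mu z (x i)) - S q (mu z0 (x i))\<bar> \<le> tau i"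
  shows "conf_pi_lo n x y mu S tau z zh \<le> conf_pi n x y mu S z
       \<and> conf_pi n x y mu S z \<le> conf_pi_up n x y mu S tau z zh"
proof -
  have enclosed: "conf_L n x y mu S tau z zh i \<le> conf_E n x y mu S z i
      \<and> conf_E n x y mu S z i \<le> conf_U n x y mu S tau z zh i" if "i \<in> {1..n + 1}" for i
    by (rule conf_E_enclosed[OF _ that]) (rule assms(3))
  have "n + 1 \<in> {1..n + 1}" by simp
  note counts = rank_count_bounds[where l = "conf_L n x y mu S tau z zh" and e = "conf_E n x y mu S z"
      and u = "conf_U n x y mu S tau z zh", OF enclosed this]
  have weight_nonneg: "0 \<le> 1 / real (n + 1)" by simp
  show ?thesis
    unfolding conf_pi_lo_def conf_pi_def conf_pi_up_def
    using one_minus_scaled_antimono[OF counts(1) weight_nonneg]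
      one_minus_scaled_antimono[OF counts(2) weight_nonneg]
    by blast
qed

end
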